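(* Fix $K$ and $K_T$ with $0<K_T<K$. Among all partitions $\mathcal{C}$ of $[N]$ into $K$ equally sized clusters, the set of maximizers of $\operatorname{Tr}\big(\operatorname{Cov}_{\mathbf{Z}\sim\mathcal{D}(\mathcal{C})}(\mathbf{Z},\mathbf{e})\big)$ equals the set of minimizers of $\mathcal{H}(\mathcal{C})$, where $\operatorname{Cov}(\mathbf{Z},\mathbf{e})=\mathbb{E}\big[(\mathbf{Z}-\mathbb{E}\mathbf{Z})(\mathbf{e}-\mathbb{E}\mathbf{e})^T\big]$ and $\mathbf{e}=(e_1(\mathbf{Z}),\dots,e_N(\mathbf{Z}))$.
   Context: Setting: $N$ experimental units $[N]$ and $M$ interference units $[M]$, with known weights $w_{is}\ge 0$; assume $\sum_{s} w_{is}>0$ for every $i$ and $\sum_i w_{is}>0$ for every $s$. For $\mathbf{Z}\in\{-1,1\}^N$, dose $d_s=\frac{\sum_{i} w_{is}Z_i}{\sum_{i} w_{is}}$ and exposure $e_i(\mathbf{Z})=\frac{\sum_{s} w_{is}d_s}{\sum_{s} w_{is}}$. Balanced $K$-cluster randomized design $\mathcal{D}(\mathcal{C})$: $K\ge2$ divides $N$, $\mathcal{C}$ is a partition of $[N]$ into $K$ clusters of size $N/K$, $\mathcal{C}(i)$ is the cluster containing $i$; choose $K_T$ clusters uniformly at random, set $Z_i=1$ on them and $Z_i=-1$ elsewhere. $\mathcal{H}(\mathcal{C})=\sum_{i\in[N]}\sum_{j\in[N]\setminus\mathcal{C}(i)}\sum_{s\in[M]}\frac{w_{is}}{\sum_{s'}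 w_{is'}}\frac{w_{js}}{\sum_{k} w_{ks}}$. *)

theory Defs
  imports "HOL-Analysis.Analysis" "HOL-Library.Disjoint_Sets"
begin

text \<open>Experimental units are 0..<N, interference units are 0..<M,
  weights w i s (unit i, interference unit s).\<close>

definition dose :: "nat \<Rightarrow> (nat \<Rightarrow> nat \<Rightarrow> real) \<Rightarrow> (nat \<Rightarrow> real) \<Rightarrow> nat \<Rightarrow> real" where
  "dose N w Z s = (\<Sum>i<N. w i s * Z i) / (\<Sum>i<N. w i s)"

definition exposure :: "nat \<Rightarrow> nat \<Rightarrow> (nat \<Rightarrow> nat \<Rightarrow> real) \<Rightarrow> (nat \<Rightarrow> real) \<Rightarrow> nat \<Rightarrow> real" where
  "exposure N M w Z i = (\<Sum>s<M. w i s * dose N w Z s) / (\<Sum>s<M. w i s)"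

definition balanced_partitions :: "nat \<Rightarrow> nat \<Rightarrow> nat set set set" where
  "balanced_partitions N K = {C. partition_on {..<N} C \<and> card C = K \<and> (\<forall>c\<in>C. card c = N div K)}"

definition cluster_of :: "nat set set \<Rightarrow> nat \<Rightarrow> nat set" where
  "cluster_of C i = (THE c. c \<in> C \<and> i \<in> c)"

text \<open>Outcomes of the design D(C): the set T of K_T treated clusters, chosen uniformly.\<close>
definition treat_choices :: "nat set set \<Rightarrow> nat \<Rightarrow> nat set set set" where
  "treat_choices C KT = {T. T \<subseteq> C \<and> card T = KT}"

definition assignment :: "nat set set \<Rightarrow> nat \<Rightarrow> real" where
  "assignment T i = (if i \<in> \<Union>T then 1 else -1)"

definition design_expect :: "nat set set \<Rightarrow> nat \<Rightarrow> ((nat \<Rightarrow> real) \<Rightarrow> real) \<Rightarrow> real" where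
  "design_expect C KT f =
     (\<Sum>T\<in>treat_choices C KT. f (assignment T)) / real (card (treat_choices C KT))"

definition trace_cov :: "nat \<Rightarrow> nat \<Rightarrow> (nat \<Rightarrow> nat \<Rightarrow> real) \<Rightarrow> nat \<Rightarrow> nat set set \<Rightarrow> real" where
  "trace_cov N M w KT C =
     (\<Sum>i<N. design_expect C KT (\<lambda>Z.
        (Z i - design_expect C KT (\<lambda>Z'. Z' i)) *
        (exposure N M w Z i - design_expect C KT (\<lambda>Z'. exposure N M w Z' i))))"

definition H_crit :: "nat \<Rightarrow> nat \<Rightarrow> (nat \<Rightarrow> nat \<Rightarrow> real) \<Rightarrow> nat set set \<Rightarrow> real" where
  "H_crit N M w C =
     (\<Sum>i<N. \<Sum>j\<in>{..<N} - cluster_of C i. \<Sum>s<M.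
        (w i s / (\<Sum>s'<M. w i s')) * (w j s / (\<Sum>k<N. w k s)))"

end

theory Submission
  imports Defs
begin

text \<open>Exposure is linear in the assignment, \<open>e = A Z\<close>, with a row-stochastic weight matrix
  \<open>A\<close> whose entries linking different clusters sum to \<open>H(C)\<close>. Hence
  \<open>Tr Cov(Z, e) = \<Sum>i j. A i j * Cov(Z i, Z j)\<close>, and under the cluster design \<open>Cov(Z i, Z j)\<close>
  only depends on whether \<open>i\<close> and \<open>j\<close> share a cluster: it is \<open>\<alpha>\<close> within and \<open>\<beta> < \<alpha>\<close>
  across clusters. So the trace equals \<open>\<alpha> N - (\<alpha> - \<beta>) H(C)\<close>, a strictly decreasing affine
  function of \<open>H(C)\<close>.\<close>

lemma card_subsets_containing:
  assumes "finite A" "c \<in> A" "k \<ge> 1"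
  shows "card {T. T \<subseteq> A \<and> card T = k \<and> c \<in> T} = (card A - 1) choose (k - 1)"
proof -
  let ?U = "{U. U \<subseteq> A - {c} \<and> card U = k - 1}"
  have "{T. T \<subseteq> A \<and> card T = k \<and> c \<in> T} = insert c ` ?U"
  proof (intro equalityI subsetI)
    fix T assume T: "T \<in> {T. T \<subseteq> A \<and> card T = k \<and> c \<in> T}"
    then have "T - {c} \<in> ?U" using finite_subset[OF _ assms(1)] by auto
    moreover have "T = insert c (T - {c})" using T by auto
    ultimately show "T \<in> insert c ` ?U" by blast
  next
    fix T assume "T \<in> insert c ` ?U"
    then obtain U where U: "U \<in> ?U" "T = insert c U" by blast
    then have "finite U" "c \<notin> U" using assms(1) finite_subset[of U A] by auto
    then show "T \<in> {T. T \<subseteq> A \<and> card T = k \<and> c \<in> T}"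
      using U assms by auto
  qed
  moreover have "inj_on (insert c) ?U" by (rule inj_onI) blast
  ultimately show ?thesis
    using assms by (simp add: card_image n_subsets)
qed

lemma card_subsets_containing_both:
  assumes "finite A" "c \<in> A" "d \<in> A" "c \<noteq> d" "k \<ge> 1"
  shows "real (card {T. T \<subseteq> A \<and> card T = k \<and> c \<in> T \<and> d \<in> T})
       = real ((card A - 1) choose (k - 1)) - real ((card A - 2) choose (k - 1))"
proof -
  have split: "{T. T \<subseteq> A \<and> card T = k \<and> c \<in> T}
      = {T. T \<subseteq> A \<and> card T = k \<and> c \<in> T \<and> d \<in> T} \<union> {T. T \<subseteq> A - {d} \<and> card T = k \<and> c \<in> T}"
    by auto
  have "card {T. T \<subseteq> A \<and> card T = k \<and> c \<in> T}
      = card {T. T \<subseteq> A \<and> card T = k \<and> c \<in> T \<and> d \<in> T} + card {T. T \<subseteq> A - {d} \<and> card T = k \<and> c \<in> T}"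
    unfolding split by (intro card_Un_disjoint) (use assms(1) in auto)
  moreover have "card A - 2 = card (A - {d}) - 1" using assms(3) by simp
  ultimately show ?thesis
    using assms card_subsets_containing[of A c k] card_subsets_containing[of "A - {d}" c k] by simp
qed

lemma average_centered_sign_product:
  fixes S :: "'a set" and a b :: real
  assumes "finite S" "card S > 0"
    and "card {T\<in>S. P T} = a" "card {T\<in>S. Q T} = a" "card {T\<in>S. P T \<and> Q T} = b"
  defines "n \<equiv> real (card S)"
  shows "(\<Sum>T\<in>S. (2 * of_bool (P T) - 1 - (2 * a / n - 1)) * (2 * of_bool (Q T) - 1 - (2 * a / n - 1))) / n
       = 4 * (b / n - (a / n)\<^sup>2)"
proof -
  define p where "p = a / n"
  have "\<And>T. (2 * of_bool (P T) - 1 - (2 * a / n - 1)) * (2 * of_bool (Q T) - 1 - (2 * a / n - 1)) =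
     4 * of_bool (P T \<and> Q T) - 4 * p * of_bool (P T) - 4 * p * of_bool (Q T) + 4 * p\<^sup>2"
    by (auto simp: p_def power2_eq_square algebra_simps)
  then have "(\<Sum>T\<in>S. (2 * of_bool (P T) - 1 - (2 * a / n - 1)) * (2 * of_bool (Q T) - 1 - (2 * a / n - 1)))
     = 4 * b - 8 * p * a + 4 * p\<^sup>2 * n"
    using assms(1,3-5) by (simp add: sum.distrib sum_subtractf n_def Collect_conj_eq Int_commute flip: sum_distrib_left)
  then show ?thesis
    using assms(2) by (simp add: p_def n_def field_simps power2_eq_square)
qed

lemma partition_on_mem_eq:
  assumes "partition_on A C" "c \<in> C" "d \<in> C" "i \<in> c" "i \<in> d"
  shows "c = d"
  using assms disjointD[OF partition_onD2[OF assms(1)]] by blast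

lemma
  assumes "partition_on A C" and "i \<in> A"
  shows cluster_of_mem: "cluster_of C i \<in> C" and mem_cluster_of: "i \<in> cluster_of C i"
proof -
  obtain c where "c \<in> C" "i \<in> c" using assms partition_onD1 by blast
  then have "\<exists>!c. c \<in> C \<and> i \<in> c" using partition_on_mem_eq[OF assms(1)] by blast
  from theI'[OF this] show "cluster_of C i \<in> C" "i \<in> cluster_of C i"
    unfolding cluster_of_def by auto
qed

lemma cluster_of_eqI:
  assumes "partition_on A C" and "c \<in> C" "i \<in> c"
  shows "cluster_of C i = c"
proof -
  have "i \<in> A" using assms partition_onD1 by blast
  then show ?thesis
    using partition_on_mem_eq[OF assms(1) cluster_of_mem[OF assms(1)] assms(2)] mem_cluster_of[OF assms(1)] assms(3)
    by blast
qed

lemma mem_cluster_of_iff: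
  assumes "partition_on A C" and "i \<in> A" "j \<in> A"
  shows "j \<in> cluster_of C i \<longleftrightarrow> cluster_of C j = cluster_of C i"
  using cluster_of_eqI[OF assms(1) cluster_of_mem[OF assms(1,2)]] mem_cluster_of[OF assms(1,3)] by auto

lemma assignment_eq_sign:
  assumes "partition_on A C" and "i \<in> A" and "T \<subseteq> C"
  shows "assignment T i = 2 * of_bool (cluster_of C i \<in> T) - 1"
proof -
  have "i \<in> \<Union>T \<longleftrightarrow> cluster_of C i \<in> T"
    using assms cluster_of_eqI[OF assms(1)] mem_cluster_of[OF assms(1,2)] by blast
  then show ?thesis unfolding assignment_def by auto
qed

definition exposure_weight :: "nat \<Rightarrow> nat \<Rightarrow> (nat \<Rightarrow> nat \<Rightarrow> real) \<Rightarrow> nat \<Rightarrow> nat \<Rightarrow> real" where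
  "exposure_weight N M w i j = (\<Sum>s<M. (w i s / (\<Sum>s'<M. w i s')) * (w j s / (\<Sum>k<N. w k s)))"

lemma exposure_eq_weighted_sum: "exposure N M w Z i = (\<Sum>j<N. exposure_weight N M w i j * Z j)"
proof -
  have "exposure N M w Z i = (\<Sum>s<M. \<Sum>j<N. (w i s / (\<Sum>s'<M. w i s')) * (w j s / (\<Sum>k<N. w k s)) * Z j)"
    unfolding exposure_def dose_def
    by (simp add: sum_divide_distrib sum_distrib_left sum_distrib_right mult_ac)
  then show ?thesis
    unfolding exposure_weight_def by (subst (asm) sum.swap) (simp add: sum_distrib_right)
qed

lemma sum_exposure_weight:
  assumes "(\<Sum>s<M. w i s) > 0" and "\<And>s. s < M \<Longrightarrow> (\<Sum>k<N. w k s) > 0"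
  shows "(\<Sum>j<N. exposure_weight N M w i j) = 1"
proof -
  have "(\<Sum>j<N. exposure_weight N M w i j)
      = (\<Sum>s<M. (w i s / (\<Sum>s'<M. w i s')) * ((\<Sum>j<N. w j s) / (\<Sum>k<N. w k s)))"
    unfolding exposure_weight_def
    by (subst sum.swap) (simp only: sum_distrib_left[symmetric] sum_divide_distrib[symmetric])
  also have "\<dots> = (\<Sum>s<M. w i s / (\<Sum>s'<M. w i s'))"
    using assms(2) by (intro sum.cong) (auto simp: less_imp_neq[symmetric])
  also have "\<dots> = 1" using assms(1) by (simp flip: sum_divide_distrib)
  finally show ?thesis .
qed

lemma H_crit_eq_weight_across_clusters:
  assumes "partition_on {..<N} C"
  shows "H_crit N M w C = (\<Sum>i<N. \<Sum>j<N.
           if cluster_of C j \<noteq> cluster_of C i then exposure_weight N M w i j else 0)"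
proof -
  have "H_crit N M w C = (\<Sum>i<N. \<Sum>j\<in>{..<N} - cluster_of C i. exposure_weight N M w i j)"
    unfolding H_crit_def exposure_weight_def ..
  also have "\<dots> = (\<Sum>i<N. \<Sum>j<N.
           if cluster_of C j \<noteq> cluster_of C i then exposure_weight N M w i j else 0)"
  proof (rule sum.cong[OF refl])
    fix i assume "i \<in> {..<N}"
    then have "{..<N} - cluster_of C i = {j \<in> {..<N}. cluster_of C j \<noteq> cluster_of C i}"
      using mem_cluster_of_iff[OF assms, of i] by auto
    then show "(\<Sum>j\<in>{..<N} - cluster_of C i. exposure_weight N M w i j)
      = (\<Sum>j<N. if cluster_of C j \<noteq> cluster_of C i then exposure_weight N M w i j else 0)"
      by (simp only: sum.inter_filter[OF finite_lessThan])
  qed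
  finally show ?thesis .
qed

definition design_cov :: "nat set set \<Rightarrow> nat \<Rightarrow> ((nat \<Rightarrow> real) \<Rightarrow> real) \<Rightarrow> ((nat \<Rightarrow> real) \<Rightarrow> real) \<Rightarrow> real" where
  "design_cov C KT f g =
     design_expect C KT (\<lambda>Z. (f Z - design_expect C KT f) * (g Z - design_expect C KT g))"

lemma design_expect_sum: "design_expect C KT (\<lambda>Z. \<Sum>j\<in>J. f j Z) = (\<Sum>j\<in>J. design_expect C KT (f j))"
  unfolding design_expect_def by (subst sum.swap) (simp add: sum_divide_distrib)

lemma design_expect_cmult: "design_expect C KT (\<lambda>Z. a * f Z) = a * design_expect C KT f"
  unfolding design_expect_def by (simp add: sum_distrib_left)

lemma design_cov_sum_right:
  "design_cov C KT f (\<lambda>Z. \<Sum>j\<in>J. a j * g j Z) = (\<Sum>j\<in>J. a j * design_cov C KT f (g j))"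
proof -
  have "(f Z - design_expect C KT f) * ((\<Sum>j\<in>J. a j * g j Z) - (\<Sum>j\<in>J. a j * design_expect C KT (g j)))
      = (\<Sum>j\<in>J. a j * ((f Z - design_expect C KT f) * (g j Z - design_expect C KT (g j))))" for Z
    by (simp add: sum_distrib_left algebra_simps flip: sum_subtractf)
  then show ?thesis
    unfolding design_cov_def by (simp add: design_expect_sum design_expect_cmult)
qed

lemma trace_cov_eq_weighted_sign_cov:
  "trace_cov N M w KT C =
     (\<Sum>i<N. \<Sum>j<N. exposure_weight N M w i j * design_cov C KT (\<lambda>Z. Z i) (\<lambda>Z. Z j))"
  unfolding trace_cov_def exposure_eq_weighted_sum design_cov_def[symmetric] design_cov_sum_right ..

definition treat_prob :: "nat \<Rightarrow> nat \<Rightarrow> real" where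
  "treat_prob K KT = real ((K - 1) choose (KT - 1)) / real (K choose KT)"

text \<open>Pascal's rule instead of \<open>(K - 2) choose (KT - 2)\<close>, which truncated subtraction would
  turn into \<open>1\<close> rather than \<open>0\<close> when \<open>KT = 1\<close>.\<close>
definition joint_treat_prob :: "nat \<Rightarrow> nat \<Rightarrow> real" where
  "joint_treat_prob K KT =
     (real ((K - 1) choose (KT - 1)) - real ((K - 2) choose (KT - 1))) / real (K choose KT)"

definition within_cluster_cov :: "nat \<Rightarrow> nat \<Rightarrow> real" where
  "within_cluster_cov K KT = 4 * (treat_prob K KT - (treat_prob K KT)\<^sup>2)"

definition between_cluster_cov :: "nat \<Rightarrow> nat \<Rightarrow> real" where
  "between_cluster_cov K KT = 4 * (joint_treat_prob K KT - (treat_prob K KT)\<^sup>2)"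

lemma between_cluster_cov_less:
  assumes "0 < KT" "KT < K"
  shows "between_cluster_cov K KT < within_cluster_cov K KT"
proof -
  have "real (K choose KT) > 0" "real ((K - 2) choose (KT - 1)) > 0" using assms by simp_all
  then show ?thesis
    unfolding within_cluster_cov_def between_cluster_cov_def joint_treat_prob_def treat_prob_def
    by (simp add: divide_strict_right_mono)
qed

lemma design_cov_sign:
  assumes C: "partition_on A C" "finite C" "card C = K" and KT: "0 < KT" "KT < K"
    and "i \<in> A" "j \<in> A"
  shows "design_cov C KT (\<lambda>Z. Z i) (\<lambda>Z. Z j) =
    (if cluster_of C i = cluster_of C j then within_cluster_cov K KT else between_cluster_cov K KT)"
proof -
  define S where "S = treat_choices C KT"
  define n where "n = real (card S)"
  define a where "a = real ((K - 1) choose (KT - 1))"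
  have S: "S = {T. T \<subseteq> C \<and> card T = KT}" unfolding S_def treat_choices_def ..
  have "finite S" unfolding S using C(2) by simp
  have n: "n = real (K choose KT)" unfolding n_def S using n_subsets[OF C(2)] C(3) by simp
  then have "n > 0" using KT by simp
  have sign: "assignment T k = 2 * of_bool (cluster_of C k \<in> T) - 1" if "T \<in> S" "k \<in> A" for T k
    using assignment_eq_sign[OF C(1) that(2)] that(1) unfolding S by blast
  have treated: "card {T \<in> S. c \<in> T} = a" if "c \<in> C" for c
    unfolding S a_def using card_subsets_containing[OF C(2) that, of KT] C(3) KT by simp
  have mean: "design_expect C KT (\<lambda>Z. Z k) = 2 * a / n - 1" if "k \<in> A" for k
  proof -
    have "design_expect C KT (\<lambda>Z. Z k) = (\<Sum>T\<in>S. 2 * of_bool (cluster_of C k \<in> T) - 1) / n"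
      unfolding design_expect_def S_def[symmetric] n_def[symmetric] using sign[OF _ that] by simp
    also have "\<dots> = (2 * a - n) / n"
      using treated[OF cluster_of_mem[OF C(1) that]] \<open>finite S\<close>
      by (simp add: sum_subtractf n_def Collect_conj_eq Int_commute flip: sum_distrib_left)
    finally show ?thesis using \<open>n > 0\<close> by (simp add: field_simps)
  qed
  let ?ci = "cluster_of C i" and ?cj = "cluster_of C j"
  have "?ci \<in> C" "?cj \<in> C" using cluster_of_mem[OF C(1)] assms(6,7) by auto
  have both: "card {T \<in> S. ?ci \<in> T \<and> ?cj \<in> T} =
      (if ?ci = ?cj then a else real ((K - 1) choose (KT - 1)) - real ((K - 2) choose (KT - 1)))"
    using treated[OF \<open>?ci \<in> C\<close>] card_subsets_containing_both[OF C(2) \<open>?ci \<in> C\<close> \<open>?cj \<in> C\<close>, of KT] C(3) KT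
    unfolding S by auto
  have "design_cov C KT (\<lambda>Z. Z i) (\<lambda>Z. Z j) =
      (\<Sum>T\<in>S. (2 * of_bool (?ci \<in> T) - 1 - (2 * a / n - 1)) * (2 * of_bool (?cj \<in> T) - 1 - (2 * a / n - 1))) / n"
    unfolding design_cov_def mean[OF assms(6)] mean[OF assms(7)]
    unfolding design_expect_def S_def[symmetric] n_def[symmetric] using sign assms(6,7) by simp
  also have "\<dots> = 4 * (card {T \<in> S. ?ci \<in> T \<and> ?cj \<in> T} / n - (a / n)\<^sup>2)"
    unfolding n_def
    by (rule average_centered_sign_product)
      (use \<open>finite S\<close> \<open>n > 0\<close> treated \<open>?ci \<in> C\<close> \<open>?cj \<in> C\<close> in \<open>auto simp: n_def\<close>)
  finally show ?thesis
    unfolding both within_cluster_cov_def between_cluster_cov_def joint_treat_prob_def treat_prob_def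
    by (simp add: n a_def)
qed

lemma trace_cov_eq_H_crit:
  assumes C: "partition_on {..<N} C" "card C = K" and KT: "0 < KT" "KT < K"
    and "\<And>i. i < N \<Longrightarrow> (\<Sum>s<M. w i s) > 0"
    and "\<And>s. s < M \<Longrightarrow> (\<Sum>i<N. w i s) > 0"
  shows "trace_cov N M w KT C =
    within_cluster_cov K KT * real N
      - (within_cluster_cov K KT - between_cluster_cov K KT) * H_crit N M w C"
proof -
  let ?\<alpha> = "within_cluster_cov K KT" and ?\<beta> = "between_cluster_cov K KT"
  let ?A = "exposure_weight N M w" and ?cl = "cluster_of C"
  have "finite C" using C(2) KT card.infinite by force
  have "trace_cov N M w KT C = (\<Sum>i<N. \<Sum>j<N. ?A i j * (if ?cl i = ?cl j then ?\<alpha> else ?\<beta>))"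
    unfolding trace_cov_eq_weighted_sign_cov
    using design_cov_sign[OF C(1) \<open>finite C\<close> C(2) KT] by (intro sum.cong refl) auto
  also have "\<dots> = (\<Sum>i<N. ?\<alpha> * (\<Sum>j<N. ?A i j)
                    - (?\<alpha> - ?\<beta>) * (\<Sum>j<N. if ?cl j \<noteq> ?cl i then ?A i j else 0))"
  proof (rule sum.cong[OF refl])
    fix i
    have "?A i j * (if ?cl i = ?cl j then ?\<alpha> else ?\<beta>)
        = ?\<alpha> * ?A i j - (?\<alpha> - ?\<beta>) * (if ?cl j \<noteq> ?cl i then ?A i j else 0)" for j
      by (auto simp: algebra_simps)
    then show "(\<Sum>j<N. ?A i j * (if ?cl i = ?cl j then ?\<alpha> else ?\<beta>))
        = ?\<alpha> * (\<Sum>j<N. ?A i j) - (?\<alpha> - ?\<beta>) * (\<Sum>j<N. if ?cl j \<noteq> ?cl i then ?A i j else 0)"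
      by (simp only: sum_subtractf sum_distrib_left)
  qed
  also have "\<dots> = ?\<alpha> * real N - (?\<alpha> - ?\<beta>) * H_crit N M w C"
    using sum_exposure_weight assms(5,6)
    by (simp add: H_crit_eq_weight_across_clusters[OF C(1)] sum_subtractf sum_distrib_left)
  finally show ?thesis .
qed

theorem lemma2:
  fixes N M K KT :: nat and w :: "nat \<Rightarrow> nat \<Rightarrow> real"
  assumes "K \<ge> 2" and "K dvd N"
    and "0 < KT" and "KT < K"
    and "\<And>i s. i < N \<Longrightarrow> s < M \<Longrightarrow> w i s \<ge> 0"
    and "\<And>i. i < N \<Longrightarrow> (\<Sum>s<M. w i s) > 0"
    and "\<And>s. s < M \<Longrightarrow> (\<Sum>i<N. w i s) > 0"
  shows "{C \<in> balanced_partitions N K. \<forall>C' \<in> balanced_partitions N K.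
            trace_cov N M w KT C' \<le> trace_cov N M w KT C}
       = {C \<in> balanced_partitions N K. \<forall>C' \<in> balanced_partitions N K.
            H_crit N M w C \<le> H_crit N M w C'}"
proof -
  have affine: "trace_cov N M w KT C =
      within_cluster_cov K KT * real N
        - (within_cluster_cov K KT - between_cluster_cov K KT) * H_crit N M w C"
    if "C \<in> balanced_partitions N K" for C
    using that trace_cov_eq_H_crit[OF _ _ assms(3,4,6,7)] unfolding balanced_partitions_def by blast
  have "within_cluster_cov K KT - between_cluster_cov K KT > 0"
    using between_cluster_cov_less[OF assms(3,4)] by simp
  then have "trace_cov N M w KT C' \<le> trace_cov N M w KT C \<longleftrightarrow> H_crit N M w C \<le> H_crit N M w C'"
    if "C \<in> balanced_partitions N K" "C' \<in> balanced_partitions N K" for C C'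
    unfolding affine[OF that(1)] affine[OF that(2)] by simp
  then show ?thesis by blast
qed

end
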